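(* Let $A$ be a subring of a prime ring $B$ that is left or right Goldie, and let $t$ be the Goldie rank of $B$. Let $N$ be the prime radical of $A$. Then $N^t=0$.
   Context: The prime radical of a ring is the intersection of its prime ideals. The Goldie rank of a prime left (or right) Goldie ring is the length of its (simple artinian) Goldie quotient ring as a module over itself. *)

theory Defs
  imports "HOL-Algebra.Algebra"
begin

definition opp_ring :: "('a, 'b) ring_scheme \<Rightarrow> ('a, 'b) ring_scheme" where
  "opp_ring R = R\<lparr>mult := (\<lambda>x y. y \<otimes>\<^bsub>R\<^esub> x)\<rparr>"

definition left_ideal :: "'a set \<Rightarrow> ('a, 'b) ring_scheme \<Rightarrow> bool" where
  "left_ideal I R \<longleftrightarrow> additive_subgroup I R \<and>
     (\<forall>r\<in>carrier R. \<forall>a\<in>I. r \<otimes>\<^bsub>R\<^esub> a \<in> I)"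

text \<open>Prime ideal of a (not necessarily commutative) ring: a proper ideal P such that
  IJ \<subseteq> P implies I \<subseteq> P or J \<subseteq> P for ideals I, J (IJ \<subseteq> P iff all products lie in P).\<close>
definition nc_prime_ideal :: "('a, 'b) ring_scheme \<Rightarrow> 'a set \<Rightarrow> bool" where
  "nc_prime_ideal R P \<longleftrightarrow> ideal P R \<and> P \<noteq> carrier R \<and>
     (\<forall>I J. ideal I R \<longrightarrow> ideal J R \<longrightarrow> (\<forall>i\<in>I. \<forall>j\<in>J. i \<otimes>\<^bsub>R\<^esub> j \<in> P)
        \<longrightarrow> I \<subseteq> P \<or> J \<subseteq> P)"

definition prime_ring :: "('a, 'b) ring_scheme \<Rightarrow> bool" where
  "prime_ring R \<longleftrightarrow> ring R \<and> nc_prime_ideal R {\<zero>\<^bsub>R\<^esub>}"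

definition prime_radical :: "('a, 'b) ring_scheme \<Rightarrow> 'a set" where
  "prime_radical R = carrier R \<inter> \<Inter>{P. nc_prime_ideal R P}"

definition left_annihilator :: "('a, 'b) ring_scheme \<Rightarrow> 'a set \<Rightarrow> 'a set" where
  "left_annihilator R S = {r. r \<in> carrier R \<and> (\<forall>y\<in>S. r \<otimes>\<^bsub>R\<^esub> y = \<zero>\<^bsub>R\<^esub>)}"

text \<open>Left Goldie: ACC on left annihilators and no infinite direct sum of nonzero left ideals.\<close>
definition left_goldie :: "('a, 'b) ring_scheme \<Rightarrow> bool" where
  "left_goldie R \<longleftrightarrow> ring R \<and>
     \<not> (\<exists>(Y::nat \<Rightarrow> 'a set). (\<forall>n. Y n \<subseteq> carrier R) \<and>
          (\<forall>n. left_annihilator R (Y n) \<subset> left_annihilator R (Y (Suc n)))) \<and>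
     \<not> (\<exists>(L::nat \<Rightarrow> 'a set). (\<forall>n. left_ideal (L n) R \<and> L n \<noteq> {\<zero>\<^bsub>R\<^esub>}) \<and>
          (\<forall>n x. (\<forall>i\<le>n. x i \<in> L i) \<longrightarrow> finsum R x {..n} = \<zero>\<^bsub>R\<^esub> \<longrightarrow>
                 (\<forall>i\<le>n. x i = \<zero>\<^bsub>R\<^esub>)))"

definition right_goldie :: "('a, 'b) ring_scheme \<Rightarrow> bool" where
  "right_goldie R \<longleftrightarrow> left_goldie (opp_ring R)"

definition regular_elem :: "('a, 'b) ring_scheme \<Rightarrow> 'a \<Rightarrow> bool" where
  "regular_elem R s \<longleftrightarrow> s \<in> carrier R \<and>
     (\<forall>x\<in>carrier R. s \<otimes>\<^bsub>R\<^esub> x = \<zero>\<^bsub>R\<^esub> \<longrightarrow> x = \<zero>\<^bsub>R\<^esub>) \<and>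
     (\<forall>x\<in>carrier R. x \<otimes>\<^bsub>R\<^esub> s = \<zero>\<^bsub>R\<^esub> \<longrightarrow> x = \<zero>\<^bsub>R\<^esub>)"

definition classical_left_quotient ::
  "('a, 'b) ring_scheme \<Rightarrow> ('q, 'c) ring_scheme \<Rightarrow> ('a \<Rightarrow> 'q) \<Rightarrow> bool" where
  "classical_left_quotient R Q phi \<longleftrightarrow> ring R \<and> ring Q \<and> phi \<in> ring_hom R Q \<and>
     inj_on phi (carrier R) \<and>
     (\<forall>s. regular_elem R s \<longrightarrow> phi s \<in> Units Q) \<and>
     (\<forall>q\<in>carrier Q. \<exists>s a. regular_elem R s \<and> a \<in> carrier R \<and>
        q = inv\<^bsub>Q\<^esub> (phi s) \<otimes>\<^bsub>Q\<^esub> phi a)"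

definition classical_right_quotient ::
  "('a, 'b) ring_scheme \<Rightarrow> ('q, 'c) ring_scheme \<Rightarrow> ('a \<Rightarrow> 'q) \<Rightarrow> bool" where
  "classical_right_quotient R Q phi \<longleftrightarrow> classical_left_quotient (opp_ring R) (opp_ring Q) phi"

text \<open>Length n of R as a left module over itself (submodules = left ideals): there is a strictly
  increasing chain of left ideals of length n and none of length n+1.\<close>
definition left_length :: "('a, 'b) ring_scheme \<Rightarrow> nat \<Rightarrow> bool" where
  "left_length R n \<longleftrightarrow>
     (\<exists>(L::nat \<Rightarrow> 'a set). (\<forall>i\<le>n. left_ideal (L i) R) \<and> (\<forall>i<n. L i \<subset> L (Suc i))) \<and>
     \<not> (\<exists>(L::nat \<Rightarrow> 'a set). (\<forall>i\<le>Suc n. left_ideal (L i) R) \<and> (\<forall>i<Suc n. L i \<subset> L (Suc i)))"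

definition right_length :: "('a, 'b) ring_scheme \<Rightarrow> nat \<Rightarrow> bool" where
  "right_length R n \<longleftrightarrow> left_length (opp_ring R) n"

end

theory Submission
  imports Defs
begin

(* The prime radical of any ring is locally nilpotent: if a finite subset S of it had
   S^m \<noteq> 0 for every m, Zorn's lemma would give an ideal maximal among those containing no
   power S^m; such an ideal is prime, yet it cannot contain S.  Hence the entries of a word of
   length t in the prime radical of A form a finite set S with S^m = 0.  In the quotient ring Q
   the left annihilators of S^0, S^1, S^2, ... form an ascending chain of left ideals which, once
   it stops growing, is constant; it reaches Q at step m, so if S^t \<noteq> 0 it grows strictly for
   t + 1 steps, which is impossible in a ring of length t. *)

definition products_of_length :: "('a, 'b) monoid_scheme \<Rightarrow> 'a set \<Rightarrow> nat \<Rightarrow> 'a set" where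
  "products_of_length M S k = (\<lambda>xs. foldr (\<otimes>\<^bsub>M\<^esub>) xs \<one>\<^bsub>M\<^esub>) ` {xs. length xs = k \<and> set xs \<subseteq> S}"

lemma (in monoid) multlist_append:
  assumes "set xs \<subseteq> carrier G" "set ys \<subseteq> carrier G"
  shows "foldr (\<otimes>) (xs @ ys) \<one> = foldr (\<otimes>) xs \<one> \<otimes> foldr (\<otimes>) ys \<one>"
  using assms(1) by (induction xs) (simp_all add: assms(2) m_assoc)

lemma (in monoid) products_of_length_0: "products_of_length G S 0 = {\<one>}"
  by (auto simp: products_of_length_def)

lemma (in monoid) products_of_length_1:
  assumes "S \<subseteq> carrier G"
  shows "products_of_length G S 1 = S"
  using assms by (force simp: products_of_length_def length_Suc_conv)

lemma (in monoid) products_of_length_closed: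
  "S \<subseteq> carrier G \<Longrightarrow> products_of_length G S k \<subseteq> carrier G"
  by (auto simp: products_of_length_def)

lemma finite_products_of_length: "finite S \<Longrightarrow> finite (products_of_length M S k)"
  unfolding products_of_length_def
  using finite_lists_length_eq[of S k] by (simp add: conj_commute)

lemma (in monoid) products_of_length_add:
  assumes S: "S \<subseteq> carrier G"
  shows "products_of_length G S (m + n) = products_of_length G S m <#> products_of_length G S n"
proof (intro equalityI subsetI)
  fix p assume "p \<in> products_of_length G S (m + n)"
  then obtain xs where xs: "length xs = m + n" "set xs \<subseteq> S" "p = foldr (\<otimes>) xs \<one>"
    by (auto simp: products_of_length_def)
  have take: "set (take m xs) \<subseteq> S" and drop: "set (drop m xs) \<subseteq> S"
    using xs(2) by (auto dest: in_set_takeD in_set_dropD)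
  have "p = foldr (\<otimes>) (take m xs) \<one> \<otimes> foldr (\<otimes>) (drop m xs) \<one>"
    using xs(3) take drop S multlist_append by (metis append_take_drop_id order_trans)
  moreover have "length (take m xs) = m" "length (drop m xs) = n" using xs(1) by simp_all
  ultimately show "p \<in> products_of_length G S m <#> products_of_length G S n"
    using take drop unfolding set_mult_def products_of_length_def by blast
next
  fix p assume "p \<in> products_of_length G S m <#> products_of_length G S n"
  then obtain xs ys where "length xs = m" "set xs \<subseteq> S" "length ys = n" "set ys \<subseteq> S"
    and "p = foldr (\<otimes>) xs \<one> \<otimes> foldr (\<otimes>) ys \<one>"
    unfolding set_mult_def products_of_length_def by blast
  moreover have "p = foldr (\<otimes>) (xs @ ys) \<one>"
    using S \<open>set xs \<subseteq> S\<close> \<open>set ys \<subseteq> S\<close> \<open>p = _\<close> multlist_append[of xs ys]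
    by (metis order_trans)
  ultimately show "p \<in> products_of_length G S (m + n)"
    unfolding products_of_length_def by (intro image_eqI[of _ _ "xs @ ys"]) simp_all
qed

lemma products_of_length_ring_hom:
  assumes "monoid R" "h \<in> ring_hom R Q" "S \<subseteq> carrier R"
  shows "products_of_length Q (h ` S) k = h ` products_of_length R S k"
proof -
  let ?W = "\<lambda>T. {xs. length xs = k \<and> set xs \<subseteq> T}"
  have hom_multlist: "foldr (\<otimes>\<^bsub>Q\<^esub>) (map h xs) \<one>\<^bsub>Q\<^esub> = h (foldr (\<otimes>\<^bsub>R\<^esub>) xs \<one>\<^bsub>R\<^esub>)"
    if "set xs \<subseteq> carrier R" for xs
    using that
  proof (induction xs)
    case (Cons x xs)
    then show ?case
      using assms(2) by (simp add: ring_hom_mult monoid.multlist_closed[OF assms(1)])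
  qed (simp add: ring_hom_one[OF assms(2)])
  have "?W (h ` S) = map h ` ?W S"
  proof (intro equalityI subsetI)
    fix ys assume ys: "ys \<in> ?W (h ` S)"
    then have "ys \<in> map h ` lists S"
      unfolding lists_image[symmetric] by (auto intro: in_listsI)
    with ys show "ys \<in> map h ` ?W S" by (auto simp: lists_eq_set)
  qed (clarsimp simp: image_mono)
  then have "products_of_length Q (h ` S) k = (\<lambda>xs. foldr (\<otimes>\<^bsub>Q\<^esub>) (map h xs) \<one>\<^bsub>Q\<^esub>) ` ?W S"
    unfolding products_of_length_def by (simp add: image_image)
  also have "\<dots> = (\<lambda>xs. h (foldr (\<otimes>\<^bsub>R\<^esub>) xs \<one>\<^bsub>R\<^esub>)) ` ?W S"
    using assms(3) hom_multlist by (intro image_cong) auto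
  finally show ?thesis
    unfolding products_of_length_def by (simp add: image_image)
qed

lemma products_of_length_opp_ring:
  assumes "monoid R" "S \<subseteq> carrier R"
  shows "products_of_length (opp_ring R) S k = products_of_length R S k"
proof -
  let ?W = "{xs. length xs = k \<and> set xs \<subseteq> S}"
  have opp_multlist: "foldr (\<otimes>\<^bsub>opp_ring R\<^esub>) xs \<one>\<^bsub>opp_ring R\<^esub> = foldr (\<otimes>\<^bsub>R\<^esub>) (rev xs) \<one>\<^bsub>R\<^esub>"
    if "set xs \<subseteq> carrier R" for xs
    using that
  proof (induction xs)
    case (Cons x xs)
    then show ?case
      using monoid.multlist_append[OF assms(1), of "rev xs" "[x]"]
      by (simp add: opp_ring_def monoid.r_one[OF assms(1)])
  qed (simp add: opp_ring_def)
  have "products_of_length (opp_ring R) S k = (\<lambda>xs. foldr (\<otimes>\<^bsub>R\<^esub>) (rev xs) \<one>\<^bsub>R\<^esub>) ` ?W"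
    unfolding products_of_length_def using assms(2) opp_multlist by (intro image_cong) auto
  also have "\<dots> = (\<lambda>xs. foldr (\<otimes>\<^bsub>R\<^esub>) xs \<one>\<^bsub>R\<^esub>) ` (rev ` ?W)"
    by (simp add: image_image)
  also have "rev ` ?W = ?W"
    by (force intro: image_eqI[of _ rev "rev _"])
  finally show ?thesis
    unfolding products_of_length_def .
qed

definition products_avoid :: "('a, 'b) monoid_scheme \<Rightarrow> 'a set \<Rightarrow> 'a set \<Rightarrow> bool" where
  "products_avoid M S I \<longleftrightarrow> (\<forall>m. \<not> products_of_length M S m \<subseteq> I)"

lemma (in ring) set_mult_add_ideals_subset:
  assumes I: "ideal I R" and J: "ideal J R" and P: "ideal P R"
    and prod: "\<forall>i\<in>I. \<forall>j\<in>J. i \<otimes> j \<in> P"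
  shows "(I <+> P) <#> (J <+> P) \<subseteq> P"
proof
  fix x assume "x \<in> (I <+> P) <#> (J <+> P)"
  then obtain i p j q where ipjq: "i \<in> I" "p \<in> P" "j \<in> J" "q \<in> P"
    and x: "x = (i \<oplus> p) \<otimes> (j \<oplus> q)"
    unfolding set_mult_def set_add_def' by blast
  then have carr: "i \<in> carrier R" "p \<in> carrier R" "j \<in> carrier R" "q \<in> carrier R"
    using I J P by (auto dest: ideal.Icarr)
  have "x = (i \<otimes> j \<oplus> p \<otimes> j) \<oplus> (i \<otimes> q \<oplus> p \<otimes> q)"
    using carr by (simp add: x l_distr r_distr)
  moreover have "i \<otimes> j \<in> P" "p \<otimes> j \<in> P" "i \<otimes> q \<in> P" "p \<otimes> q \<in> P"
    using ipjq carr prod ideal.I_l_closed[OF P] ideal.I_r_closed[OF P] by auto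
  ultimately show "x \<in> P"
    using additive_subgroup.a_closed[OF ideal.axioms(1)[OF P]] by simp
qed

lemma (in ring) exists_maximal_ideal_products_avoid:
  assumes S: "finite S" and avoid_zero: "products_avoid R S {\<zero>}"
  obtains P where "ideal P R" "products_avoid R S P"
    "\<And>I. ideal I R \<Longrightarrow> products_avoid R S I \<Longrightarrow> P \<subseteq> I \<Longrightarrow> I = P"
proof -
  let ?F = "{I. ideal I R \<and> products_avoid R S I}"
  have "\<exists>U\<in>?F. \<forall>I\<in>C. I \<subseteq> U" if C: "subset.chain ?F C" for C
  proof -
    define U where "U = (if C = {} then {\<zero>} else \<Union>C)"
    have "subset.chain {I. ideal I R} C"
      using C by (auto simp: subset_chain_def)
    then have "ideal U R"
      unfolding U_def by (rule chain_Union_is_ideal)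
    moreover have "products_avoid R S U"
    proof (cases "C = {}")
      case True
      then show ?thesis using avoid_zero by (simp add: U_def)
    next
      case False
      have "\<not> products_of_length R S m \<subseteq> \<Union>C" for m
      proof
        assume "products_of_length R S m \<subseteq> \<Union>C"
        then obtain I where "I \<in> C" "products_of_length R S m \<subseteq> I"
          using finite_subset_Union_chain[OF finite_products_of_length[OF S] _ False C] by blast
        then show False
          using C by (auto simp: subset_chain_def products_avoid_def)
      qed
      then show ?thesis
        using False by (simp add: U_def products_avoid_def)
    qed
    moreover have "\<forall>I\<in>C. I \<subseteq> U"
      unfolding U_def by auto
    ultimately show ?thesis by blast
  qed
  then obtain P where "P \<in> ?F" "\<forall>I\<in>?F. P \<subseteq> I \<longrightarrow> I = P"
    using subset_Zorn[of ?F] by blast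
  then show thesis using that by blast
qed

lemma (in ring) maximal_ideal_products_avoid_is_prime:
  assumes S: "S \<subseteq> carrier R" and P: "ideal P R" and avoid: "products_avoid R S P"
    and max: "\<And>I. ideal I R \<Longrightarrow> products_avoid R S I \<Longrightarrow> P \<subseteq> I \<Longrightarrow> I = P"
  shows "nc_prime_ideal R P"
  unfolding nc_prime_ideal_def
proof (intro conjI allI impI)
  show "ideal P R" by fact
  have "\<one> \<notin> P"
    using avoid unfolding products_avoid_def by (metis empty_subsetI insert_subset products_of_length_0)
  then show "P \<noteq> carrier R" by auto
  have absorbs: "\<exists>m. products_of_length R S m \<subseteq> K <+> P" if K: "ideal K R" "\<not> K \<subseteq> P" for K
  proof -
    have KP: "ideal (K <+> P) R"
      by (rule add_ideals[OF K(1) P])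
    have "K \<union> P \<subseteq> K <+> P"
      using genideal_self[of "K \<union> P"] union_genideal[OF K(1) P] K(1) P
      by (auto dest: ideal.Icarr)
    with KP K(2) max have "\<not> products_avoid R S (K <+> P)" by blast
    then show ?thesis unfolding products_avoid_def by blast
  qed
  fix I J assume I: "ideal I R" and J: "ideal J R"
    and prod: "\<forall>i\<in>I. \<forall>j\<in>J. i \<otimes> j \<in> P"
  show "I \<subseteq> P \<or> J \<subseteq> P"
  proof (rule ccontr)
    assume "\<not> (I \<subseteq> P \<or> J \<subseteq> P)"
    then obtain m n where "products_of_length R S m \<subseteq> I <+> P"
      and "products_of_length R S n \<subseteq> J <+> P"
      using absorbs I J by meson
    then have "products_of_length R S (m + n) \<subseteq> (I <+> P) <#> (J <+> P)"
      unfolding products_of_length_add[OF S] by (rule mono_set_mult)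
    also have "\<dots> \<subseteq> P"
      by (rule set_mult_add_ideals_subset[OF I J P prod])
    finally show False
      using avoid unfolding products_avoid_def by blast
  qed
qed

theorem (in ring) prime_radical_locally_nilpotent:
  assumes fin: "finite S" and rad: "S \<subseteq> prime_radical R"
  shows "\<exists>m. products_of_length R S m \<subseteq> {\<zero>}"
proof (rule ccontr)
  assume "\<nexists>m. products_of_length R S m \<subseteq> {\<zero>}"
  then have "products_avoid R S {\<zero>}"
    unfolding products_avoid_def by blast
  then obtain P where P: "ideal P R" "products_avoid R S P"
    and max: "\<And>I. ideal I R \<Longrightarrow> products_avoid R S I \<Longrightarrow> P \<subseteq> I \<Longrightarrow> I = P"
    using exists_maximal_ideal_products_avoid[OF fin] by blast
  have S: "S \<subseteq> carrier R"
    using rad unfolding prime_radical_def by blast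
  have "nc_prime_ideal R P"
    using maximal_ideal_products_avoid_is_prime[OF S P max] .
  then have "products_of_length R S 1 \<subseteq> P"
    using rad products_of_length_1[OF S] unfolding prime_radical_def by blast
  with P(2) show False
    unfolding products_avoid_def by blast
qed

lemma (in ring) left_idealI:
  assumes "I \<subseteq> carrier R" "\<zero> \<in> I"
    and "\<And>a b. a \<in> I \<Longrightarrow> b \<in> I \<Longrightarrow> a \<oplus> b \<in> I"
    and "\<And>a. a \<in> I \<Longrightarrow> \<ominus> a \<in> I"
    and "\<And>r a. r \<in> carrier R \<Longrightarrow> a \<in> I \<Longrightarrow> r \<otimes> a \<in> I"
  shows "left_ideal I R"
proof -
  have "subgroup I (add_monoid R)"
    by (rule add.subgroupI) (use assms in \<open>auto simp: a_inv_def\<close>)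
  then show ?thesis
    unfolding left_ideal_def using assms(5) additive_subgroupI by blast
qed

lemma (in ring) left_ideal_left_annihilator:
  assumes "T \<subseteq> carrier R"
  shows "left_ideal (left_annihilator R T) R"
  by (rule left_idealI)
    (use assms in \<open>auto simp: left_annihilator_def l_distr l_minus m_assoc subset_iff\<close>)

lemma (in ring) left_annihilator_products_Suc:
  assumes "S \<subseteq> carrier R"
  shows "left_annihilator R (products_of_length R S (Suc k)) =
    {q \<in> carrier R. \<forall>g\<in>S. q \<otimes> g \<in> left_annihilator R (products_of_length R S k)}"
  using products_of_length_add[OF assms, of 1 k] products_of_length_1[OF assms]
    products_of_length_closed[OF assms] assms
  by (auto simp: left_annihilator_def set_mult_def m_assoc subset_iff)

lemma (in ring) left_annihilator_products_mono:
  assumes "S \<subseteq> carrier R"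
  shows "left_annihilator R (products_of_length R S k) \<subseteq>
    left_annihilator R (products_of_length R S (Suc k))"
  using products_of_length_add[OF assms, of k 1] products_of_length_1[OF assms]
    products_of_length_closed[OF assms] assms
  by (auto simp: left_annihilator_def set_mult_def m_assoc[symmetric] subset_iff)

lemma (in ring) products_vanish_at_left_length:
  assumes len: "left_length R t" and S: "S \<subseteq> carrier R"
    and nil: "products_of_length R S m \<subseteq> {\<zero>}"
  shows "products_of_length R S t \<subseteq> {\<zero>}"
proof (rule ccontr)
  define Ann where "Ann k = left_annihilator R (products_of_length R S k)" for k
  have Ann_Suc: "Ann (Suc k) = {q \<in> carrier R. \<forall>g\<in>S. q \<otimes> g \<in> Ann k}" for k
    unfolding Ann_def by (rule left_annihilator_products_Suc[OF S])
  have mono: "Ann j \<subseteq> Ann k" if "j \<le> k" for j k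
    using lift_Suc_mono_le[of Ann, OF _ that] left_annihilator_products_mono[OF S]
    unfolding Ann_def by blast
  have full: "Ann m = carrier R"
    using nil by (auto simp: Ann_def left_annihilator_def)
  assume "\<not> ?thesis"
  then have one_notin: "\<one> \<notin> Ann t"
    using products_of_length_closed[OF S] by (auto simp: Ann_def left_annihilator_def subset_iff)
  have stable: "Ann (k + n) = Ann k" if "Ann k = Ann (Suc k)" for k n
  proof (induction n)
    case (Suc n)
    then have "Ann (Suc (k + n)) = Ann (Suc k)" by (simp add: Ann_Suc)
    with that show ?case by simp
  qed simp
  have strict: "Ann k \<subset> Ann (Suc k)" if "k \<le> t" for k
  proof -
    have "Ann k \<noteq> Ann (Suc k)"
    proof
      assume "Ann k = Ann (Suc k)"
      then have "Ann k = Ann (k + m)" by (rule stable[symmetric])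
      also have "\<dots> = carrier R"
        using mono[of m "k + m"] full by (auto simp: Ann_def left_annihilator_def)
      finally show False using mono[OF that] one_notin by auto
    qed
    then show ?thesis by (simp add: mono psubset_eq)
  qed
  have "\<forall>i\<le>Suc t. left_ideal (Ann i) R"
    unfolding Ann_def using left_ideal_left_annihilator products_of_length_closed[OF S] by blast
  moreover have "\<forall>i<Suc t. Ann i \<subset> Ann (Suc i)"
    using strict by simp
  ultimately show False
    using len unfolding left_length_def by blast
qed

lemma classical_left_quotient_products_vanish:
  assumes quot: "classical_left_quotient R Q phi" and len: "left_length Q t"
    and S: "S \<subseteq> carrier R" and nil: "products_of_length R S m \<subseteq> {\<zero>\<^bsub>R\<^esub>}"
  shows "products_of_length R S t \<subseteq> {\<zero>\<^bsub>R\<^esub>}"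
proof -
  from quot have R: "ring R" and Q: "ring Q" and hom: "phi \<in> ring_hom R Q"
    and inj: "inj_on phi (carrier R)"
    unfolding classical_left_quotient_def by auto
  have transfer: "products_of_length Q (phi ` S) k \<subseteq> {\<zero>\<^bsub>Q\<^esub>} \<longleftrightarrow>
      products_of_length R S k \<subseteq> {\<zero>\<^bsub>R\<^esub>}" for k
  proof -
    let ?P = "products_of_length R S k"
    have "?P \<subseteq> carrier R"
      using monoid.products_of_length_closed[OF ring.is_monoid[OF R] S] .
    then have "phi ` ?P \<subseteq> {phi \<zero>\<^bsub>R\<^esub>} \<longleftrightarrow> ?P \<subseteq> {\<zero>\<^bsub>R\<^esub>}"
      using inj_onD[OF inj] ring.ring_simprules(2)[OF R] by blast
    then show ?thesis
      by (simp add: products_of_length_ring_hom[OF ring.is_monoid[OF R] hom S]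
          ring_hom_zero[OF hom R Q])
  qed
  have "phi ` S \<subseteq> carrier Q" using S ring_hom_closed[OF hom] by auto
  moreover have "products_of_length Q (phi ` S) m \<subseteq> {\<zero>\<^bsub>Q\<^esub>}"
    using nil transfer[of m] by simp
  ultimately have "products_of_length Q (phi ` S) t \<subseteq> {\<zero>\<^bsub>Q\<^esub>}"
    by (rule ring.products_vanish_at_left_length[OF Q len])
  then show ?thesis using transfer[of t] by simp
qed

theorem lemma2p8:
  fixes B :: "('a, 'b) ring_scheme" and A :: "'a set"
    and Q :: "('q, 'c) ring_scheme" and phi :: "'a \<Rightarrow> 'q" and t :: nat
  assumes "prime_ring B"
    and "subring A B"
    and "(left_goldie B \<and> classical_left_quotient B Q phi \<and> left_length Q t) \<or>
         (right_goldie B \<and> classical_right_quotient B Q phi \<and> right_length Q t)"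
  shows "\<forall>xs. length xs = t \<and> set xs \<subseteq> prime_radical (B\<lparr>carrier := A\<rparr>) \<longrightarrow>
           foldr (\<otimes>\<^bsub>B\<^esub>) xs \<one>\<^bsub>B\<^esub> = \<zero>\<^bsub>B\<^esub>"
proof (intro allI impI)
  fix xs assume xs: "length xs = t \<and> set xs \<subseteq> prime_radical (B\<lparr>carrier := A\<rparr>)"
  have B: "ring B" using assms(1) unfolding prime_ring_def by blast
  have S: "set xs \<subseteq> carrier B"
    using xs subringE(1)[OF assms(2)] unfolding prime_radical_def by auto
  obtain m where "products_of_length (B\<lparr>carrier := A\<rparr>) (set xs) m \<subseteq> {\<zero>\<^bsub>B\<^esub>}"
    using ring.prime_radical_locally_nilpotent[OF ring.subring_is_ring[OF B assms(2)], of "set xs"] xs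
    by auto
  then have m: "products_of_length B (set xs) m \<subseteq> {\<zero>\<^bsub>B\<^esub>}"
    by (simp add: products_of_length_def)
  from assms(3) have "products_of_length B (set xs) t \<subseteq> {\<zero>\<^bsub>B\<^esub>}"
  proof
    assume "left_goldie B \<and> classical_left_quotient B Q phi \<and> left_length Q t"
    then show ?thesis
      using classical_left_quotient_products_vanish S m by blast
  next
    assume "right_goldie B \<and> classical_right_quotient B Q phi \<and> right_length Q t"
    then have "classical_left_quotient (opp_ring B) (opp_ring Q) phi" "left_length (opp_ring Q) t"
      unfolding classical_right_quotient_def right_length_def by auto
    moreover have "products_of_length (opp_ring B) (set xs) k = products_of_length B (set xs) k" for k
      by (rule products_of_length_opp_ring[OF ring.is_monoid[OF B] S])
    moreover have "carrier (opp_ring B) = carrier B" "\<zero>\<^bsub>opp_ring B\<^esub> = \<zero>\<^bsub>B\<^esub>"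
      by (simp_all add: opp_ring_def)
    ultimately show ?thesis
      using classical_left_quotient_products_vanish[of "opp_ring B" "opp_ring Q" phi t "set xs" m] S m
      by auto
  qed
  moreover have "foldr (\<otimes>\<^bsub>B\<^esub>) xs \<one>\<^bsub>B\<^esub> \<in> products_of_length B (set xs) t"
    using xs unfolding products_of_length_def by auto
  ultimately show "foldr (\<otimes>\<^bsub>B\<^esub>) xs \<one>\<^bsub>B\<^esub> = \<zero>\<^bsub>B\<^esub>" by blast
qed

end
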